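(* Let $(\mathcal{P},\mathcal{L})$ be a $(6,4)$ net, and let $\mathcal{C}$ be its binary code, i.e. the $\mathbb{F}_2$-subspace of $\mathbb{F}_2^{\mathcal{P}}$ spanned by the characteristic functions $v^{\lambda}$ of the lines $\lambda\in\mathcal{L}$. Then $\dim_{\mathbb{F}_2}\mathcal{C}\le 20$.
   Context: An $(n,k)$ net is a pair $(\mathcal{P},\mathcal{L})$ where $\mathcal{P}$ is a set of $n^2$ points and $\mathcal{L}$ is a collection of $n$-element subsets of $\mathcal{P}$ (lines) such that: (1) $\mathcal{L}$ is the disjoint union of $k$ parallel classes, each of which is a partition of $\mathcal{P}$ into $n$ lines; (2) two lines from different parallel classes meet in exactly one point. $\mathbb{F}_2^{\mathcal{P}}$ denotes the $\mathbb{F}_2$-vector space of functions $\mathcal{P}\to\mathbb{F}_2$, and for $X\subseteq\mathcal{P}$, $v^X$ is the characteristic function of $X$. *)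

theory Defs
  imports Complex_Main "HOL-Library.Z2" "HOL-Library.Function_Algebras"
begin

definition is_net :: "'p set \<Rightarrow> 'p set set \<Rightarrow> nat \<Rightarrow> nat \<Rightarrow> bool" where
  "is_net P L n k \<longleftrightarrow>
     finite P \<and> card P = n ^ 2 \<and>
     (\<exists>Cls :: 'p set set set.
        finite Cls \<and> card Cls = k \<and> L = \<Union>Cls \<and>
        (\<forall>C1\<in>Cls. \<forall>C2\<in>Cls. C1 \<noteq> C2 \<longrightarrow> C1 \<inter> C2 = {}) \<and>
        (\<forall>C\<in>Cls. card C = n \<and>
           (\<forall>l\<in>C. l \<subseteq> P \<and> card l = n) \<and>
           (\<forall>x\<in>P. \<exists>!l. l \<in> C \<and> x \<in> l)) \<and>
        (\<forall>C1\<in>Cls. \<forall>C2\<in>Cls. C1 \<noteq> C2 \<longrightarrow>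
           (\<forall>l1\<in>C1. \<forall>l2\<in>C2. card (l1 \<inter> l2) = 1)))"

definition charvec :: "'p set \<Rightarrow> 'p \<Rightarrow> bit" where
  "charvec X = (\<lambda>x. if x \<in> X then 1 else 0)"

definition fscale :: "bit \<Rightarrow> ('p \<Rightarrow> bit) \<Rightarrow> ('p \<Rightarrow> bit)" where
  "fscale c f = (\<lambda>x. c * f x)"

definition binary_code :: "'p set set \<Rightarrow> ('p \<Rightarrow> bit) set" where
  "binary_code L = module.span fscale (charvec ` L)"

end

theory Submission
  imports Defs
begin

text \<open>
  Let C be the binary code of an (n,k) net with n even and H = C \<inter> C^\<bottom> its hull.
  Two parallel lines meet in 0 or n points and two non-parallel lines in exactly one, so
  for c \<in> C the inner product of c with a line depends only on the parallel class of the
  line. Hence pairing c with one line of each class is a linear map C \<rightarrow> F_2^k whose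
  kernel lies in H, and |C| \<le> 2^k |H|. Since C and H are orthogonal subspaces of F_2^P,
  also |C| |H| \<le> 2^(n^2). Together |C|^2 \<le> 2^(n^2 + k), i.e. 2 dim C \<le> n^2 + k,
  which is 40 for a (6,4) net.
\<close>

context vector_space
begin

lemma subset_if_subset_sums_eq:
  assumes "independent B" "finite B" "S \<subseteq> B" "T \<subseteq> B"
    and sums_eq: "(\<Sum>x\<in>S. x) = (\<Sum>x\<in>T. x)"
  shows "S \<subseteq> T"
proof
  fix x assume x: "x \<in> S"
  show "x \<in> T"
  proof (rule ccontr)
    assume "x \<notin> T"
    have "finite S" using assms(2,3) finite_subset by blast
    then have "x + (\<Sum>y\<in>S - {x}. y) = (\<Sum>y\<in>T. y)"
      using sums_eq sum.remove[OF \<open>finite S\<close> x, of "\<lambda>y. y"] by simp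
    then have "x = (\<Sum>y\<in>T. y) - (\<Sum>y\<in>S - {x}. y)"
      by (simp add: eq_diff_eq)
    moreover have "(\<Sum>y\<in>T. y) \<in> span (B - {x})"
      using \<open>x \<notin> T\<close> assms(4) by (intro span_sum span_base) auto
    moreover have "(\<Sum>y\<in>S - {x}. y) \<in> span (B - {x})"
      using assms(3) by (intro span_sum span_base) auto
    ultimately have "x \<in> span (B - {x})" by (metis span_diff)
    then show False using assms(1,3) x dependent_def by blast
  qed
qed

lemma two_pow_dim_le_card:
  assumes "subspace V" "finite V"
  shows "2 ^ dim V \<le> card V"
proof -
  obtain B where B: "B \<subseteq> V" "independent B" "V \<subseteq> span B" "card B = dim V"
    using basis_exists by blast
  have "finite B" using B(1) assms(2) finite_subset by blast
  have "inj_on (\<lambda>S. \<Sum>x\<in>S. x) (Pow B)"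
  proof (rule inj_onI)
    fix S T assume "S \<in> Pow B" "T \<in> Pow B" "(\<Sum>x\<in>S. x) = (\<Sum>x\<in>T. x)"
    then show "S = T"
      using subset_if_subset_sums_eq[OF B(2) \<open>finite B\<close>] by (metis PowD subset_antisym)
  qed
  moreover have "(\<lambda>S. \<Sum>x\<in>S. x) ` Pow B \<subseteq> V"
    using B(1) assms(1) by (auto intro!: subspace_sum)
  ultimately have "card (Pow B) \<le> card V"
    using card_inj_on_le assms(2) by blast
  then show ?thesis using B(4) \<open>finite B\<close> by (simp add: card_Pow)
qed

end

lemma card_le_card_image_mult_card_kernel:
  fixes f :: "'a::ab_group_add \<Rightarrow> 'b::ab_group_add"
  assumes "finite C"
    and diff_closed: "\<And>x y. x \<in> C \<Longrightarrow> y \<in> C \<Longrightarrow> x - y \<in> C"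
    and hom: "\<And>x y. x \<in> C \<Longrightarrow> y \<in> C \<Longrightarrow> f (x - y) = f x - f y"
  shows "card C \<le> card (f ` C) * card {x\<in>C. f x = 0}"
proof -
  define s where "s y = (SOME x. x \<in> C \<and> f x = y)" for y
  have s: "s (f x) \<in> C \<and> f (s (f x)) = f x" if "x \<in> C" for x
    unfolding s_def by (rule someI[of _ x]) (use that in blast)
  let ?g = "\<lambda>x. (f x, x - s (f x))"
  have "inj_on ?g C"
    by (rule inj_onI) (metis diff_add_cancel prod.inject)
  moreover have "?g ` C \<subseteq> f ` C \<times> {x\<in>C. f x = 0}"
    using s diff_closed hom by auto
  ultimately have "card C \<le> card (f ` C \<times> {x\<in>C. f x = 0})"
    using assms(1) by (intro card_inj_on_le) auto
  then show ?thesis by (simp add: card_cartesian_product)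
qed

(* Otherwise simp rewrites + and * on bit into xor and and, hiding the field structure. *)
declare add_bit_eq_xor [simp del] mult_bit_eq_and [simp del]

lemma bit_fun_add_self [simp]: "(f :: 'a \<Rightarrow> bit) + f = 0"
  by (simp add: fun_eq_iff)

lemma of_nat_bit_eq_0_if_even: "even n \<Longrightarrow> (of_nat n :: bit) = 0"
  by (elim evenE) simp

interpretation F: vector_space fscale
  by unfold_locales (auto simp: fscale_def fun_eq_iff algebra_simps)

definition dot_on :: "'a set \<Rightarrow> ('a \<Rightarrow> bit) \<Rightarrow> ('a \<Rightarrow> bit) \<Rightarrow> bit" where
  "dot_on A f g = (\<Sum>x\<in>A. f x * g x)"

lemma dot_on_commute: "dot_on A f g = dot_on A g f"
  by (simp add: dot_on_def mult.commute)

lemma dot_on_zero_right [simp]: "dot_on A f 0 = 0"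
  by (simp add: dot_on_def)

lemma dot_on_add_left: "dot_on A (f + g) h = dot_on A f h + dot_on A g h"
  by (simp add: dot_on_def distrib_right sum.distrib)

lemma dot_on_diff_left: "dot_on A (f - g) h = dot_on A f h - dot_on A g h"
  by (simp add: dot_on_def distrib_right sum.distrib)

lemma dot_on_add_right: "dot_on A f (g + h) = dot_on A f g + dot_on A f h"
  by (simp add: dot_on_def distrib_left sum.distrib)

lemma dot_on_scale_right: "dot_on A f (fscale a g) = a * dot_on A f g"
  by (simp add: dot_on_def fscale_def sum_distrib_left mult.left_commute)

lemma dot_on_scale_left: "dot_on A (fscale a f) h = a * dot_on A f h"
  by (simp add: dot_on_def fscale_def sum_distrib_left mult.assoc)

lemma dot_on_insert:
  "finite A \<Longrightarrow> p \<notin> A \<Longrightarrow> dot_on (insert p A) f g = f p * g p + dot_on A f g"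
  by (simp add: dot_on_def)

lemma dot_on_charvec:
  assumes "finite A"
  shows "dot_on A (charvec l) (charvec m) = of_nat (card (A \<inter> l \<inter> m))"
proof -
  have "dot_on A (charvec l) (charvec m) = (\<Sum>x\<in>A. if x \<in> l \<inter> m then 1 else 0)"
    unfolding dot_on_def charvec_def by (intro sum.cong) auto
  also have "\<dots> = (\<Sum>x\<in>A \<inter> (l \<inter> m). 1)"
    by (rule sum.inter_restrict[OF assms, symmetric])
  finally show ?thesis by (simp add: Int_assoc)
qed

lemma dot_on_span_eqI:
  assumes "c \<in> F.span G" and "\<And>g. g \<in> G \<Longrightarrow> dot_on A g a = dot_on A g b"
  shows "dot_on A c a = dot_on A c b"
  using assms(1)
proof (induction rule: F.span_induct_alt)
  case step
  then show ?case by (simp only: dot_on_add_left dot_on_scale_left assms(2))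
qed (simp add: dot_on_def)

definition supported_on :: "'a set \<Rightarrow> ('a \<Rightarrow> bit) set" where
  "supported_on A = {f. \<forall>x. x \<notin> A \<longrightarrow> f x = 0}"

lemma supported_on_eq_charvec_image: "supported_on A = charvec ` Pow A"
proof
  show "supported_on A \<subseteq> charvec ` Pow A"
  proof
    fix f assume "f \<in> supported_on A"
    then have "{x. f x = 1} \<in> Pow A" "f = charvec {x. f x = 1}"
      by (auto simp: supported_on_def charvec_def fun_eq_iff)
    then show "f \<in> charvec ` Pow A" by blast
  qed
qed (auto simp: supported_on_def charvec_def)

lemma card_supported_on:
  assumes "finite A"
  shows "card (supported_on A) = 2 ^ card A"
proof -
  have "inj charvec"
    by (rule injI) (auto simp: charvec_def fun_eq_iff split: if_splits)
  then have "card (charvec ` Pow A) = card (Pow A)"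
    by (meson card_image inj_on_subset subset_UNIV)
  then show ?thesis
    by (simp add: supported_on_eq_charvec_image card_Pow assms)
qed

lemma finite_supported_on: "finite A \<Longrightarrow> finite (supported_on A)"
  by (simp add: supported_on_eq_charvec_image)

lemma subspace_supported_on: "F.subspace (supported_on A)"
  by (auto simp: F.subspace_def supported_on_def fscale_def)

lemma subspace_vanishing_at: "F.subspace {f. f p = 0}"
  by (simp add: F.subspace_def fscale_def)

lemma card_le_double_card_vanishing_at:
  assumes "F.subspace U" "finite U"
  shows "card U \<le> 2 * card (U \<inter> {u. u p = 0})"
proof (cases "\<exists>u\<in>U. u p = 1")
  case True
  then obtain u1 where u1: "u1 \<in> U" "u1 p = 1" by blast
  let ?U0 = "U \<inter> {u. u p = 0}"
  have "U \<subseteq> ?U0 \<union> (\<lambda>u. u + u1) ` ?U0"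
  proof
    fix u assume u: "u \<in> U"
    show "u \<in> ?U0 \<union> (\<lambda>u. u + u1) ` ?U0"
    proof (cases "u p = 0")
      case False
      then have "u + u1 \<in> ?U0" using u u1 F.subspace_add[OF assms(1)] by simp
      moreover have "u = (u + u1) + u1" by (simp add: add.assoc)
      ultimately show ?thesis by blast
    qed (use u in blast)
  qed
  then have "card U \<le> card (?U0 \<union> (\<lambda>u. u + u1) ` ?U0)"
    using assms(2) by (intro card_mono) auto
  also have "\<dots> \<le> card ?U0 + card ((\<lambda>u. u + u1) ` ?U0)" by (rule card_Un_le)
  also have "\<dots> \<le> 2 * card ?U0" using card_image_le[of ?U0 "\<lambda>u. u + u1"] assms(2) by simp
  finally show ?thesis .
next
  case False
  then have "U \<inter> {u. u p = 0} = U" by auto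
  then show ?thesis by simp
qed

lemma card_le_double_card_image_upd_zero:
  fixes W :: "('a \<Rightarrow> bit) set"
  assumes "finite W"
  shows "card W \<le> 2 * card ((\<lambda>w. w(p := 0)) ` W)"
proof -
  let ?R = "(\<lambda>w. w(p := 0)) ` W"
  have "W \<subseteq> ?R \<union> (\<lambda>f. f(p := 1)) ` ?R"
  proof
    fix w assume "w \<in> W"
    moreover have "w = w(p := 0) \<or> w = (w(p := 0))(p := 1)"
      by (cases "w p") (auto simp: fun_eq_iff)
    ultimately show "w \<in> ?R \<union> (\<lambda>f. f(p := 1)) ` ?R" by blast
  qed
  then have "card W \<le> card (?R \<union> (\<lambda>f. f(p := 1)) ` ?R)"
    using assms by (intro card_mono) auto
  also have "\<dots> \<le> card ?R + card ((\<lambda>f. f(p := 1)) ` ?R)" by (rule card_Un_le)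
  also have "\<dots> \<le> 2 * card ?R" using card_image_le[of ?R "\<lambda>f. f(p := 1)"] assms by simp
  finally show ?thesis .
qed

lemma inj_on_upd_zero_if_orthogonal:
  assumes "F.subspace W" "finite A" "p \<notin> A" "u p = 1"
    and orth: "\<And>w. w \<in> W \<Longrightarrow> dot_on (insert p A) u w = 0"
  shows "inj_on (\<lambda>w. w(p := 0)) W"
proof (rule inj_onI)
  fix w1 w2 assume w: "w1 \<in> W" "w2 \<in> W" "w1(p := 0) = w2(p := 0)"
  have off_p: "w1 x = w2 x" if "x \<noteq> p" for x
    using fun_cong[OF w(3), of x] that by simp
  have "w1 x + w2 x = 0" if "x \<in> A" for x
  proof -
    have "x \<noteq> p" using assms(3) that by blast
    then show ?thesis using off_p by simp
  qed
  then have "dot_on A u (w1 + w2) = 0"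
    by (simp add: dot_on_def)
  moreover have "dot_on (insert p A) u (w1 + w2) = 0"
    using orth F.subspace_add[OF assms(1) w(1,2)] by blast
  ultimately have "w1 p + w2 p = 0"
    using assms(2-4) by (simp add: dot_on_insert)
  then have "w1 p = w2 p" by (cases "w1 p"; cases "w2 p") simp_all
  with off_p show "w1 = w2" by (metis ext)
qed

lemma subspace_image_upd_zero:
  assumes "F.subspace W"
  shows "F.subspace ((\<lambda>w. w(p := 0)) ` W)"
proof -
  have "Vector_Spaces.linear fscale fscale (\<lambda>w :: 'a \<Rightarrow> bit. w(p := 0))"
    by (simp add: Vector_Spaces.linear_iff F.vector_space_axioms fscale_def fun_eq_iff)
  then show ?thesis
    using module_hom.subspace_image[OF _ assms] by (simp add: linear_iff_module_hom)
qed

lemma card_mult_card_le_double_upd_zero: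
  assumes "F.subspace U" "F.subspace W" "finite U" "finite W" "finite A" "p \<notin> A"
    and orth: "\<And>u w. u \<in> U \<Longrightarrow> w \<in> W \<Longrightarrow> dot_on (insert p A) u w = 0"
  shows "card U * card W \<le> 2 * (card (U \<inter> {u. u p = 0}) * card ((\<lambda>w. w(p := 0)) ` W))"
proof (cases "\<exists>u\<in>U. u p = 1")
  case True
  then obtain u where "u \<in> U" "u p = 1" by blast
  have "inj_on (\<lambda>w. w(p := 0)) W"
    by (rule inj_on_upd_zero_if_orthogonal[where u = u, OF assms(2,5,6) \<open>u p = 1\<close>])
      (rule orth[OF \<open>u \<in> U\<close>])
  then have "card ((\<lambda>w. w(p := 0)) ` W) = card W" by (simp add: card_image)
  moreover have "card U \<le> 2 * card (U \<inter> {u. u p = 0})"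
    by (rule card_le_double_card_vanishing_at[OF assms(1,3)])
  ultimately show ?thesis by simp
next
  case False
  then have "U \<inter> {u. u p = 0} = U" by auto
  moreover have "card W \<le> 2 * card ((\<lambda>w. w(p := 0)) ` W)"
    by (rule card_le_double_card_image_upd_zero[OF assms(4)])
  ultimately show ?thesis by simp
qed

lemma card_mult_card_orthogonal_subspaces_le:
  assumes "finite A" "F.subspace U" "F.subspace W" "U \<subseteq> supported_on A" "W \<subseteq> supported_on A"
    and "\<And>u w. u \<in> U \<Longrightarrow> w \<in> W \<Longrightarrow> dot_on A u w = 0"
  shows "card U * card W \<le> 2 ^ card A"
  using assms
proof (induction A arbitrary: U W rule: finite_induct)
  case empty
  then have "U \<subseteq> {0}" "W \<subseteq> {0}" by (auto simp: supported_on_def fun_eq_iff)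
  then have "card U \<le> 1" "card W \<le> 1"
    using card_mono[of "{0}" U] card_mono[of "{0}" W] by simp_all
  then show ?case using mult_le_mono[of "card U" 1 "card W" 1] by simp
next
  case (insert p A)
  define U0 where "U0 = U \<inter> {u. u p = 0}"
  define W0 where "W0 = (\<lambda>w. w(p := 0)) ` W"
  have "card U0 * card W0 \<le> 2 ^ card A"
  proof (rule insert.IH)
    show "F.subspace U0"
      unfolding U0_def by (rule F.subspace_inter[OF insert.prems(1) subspace_vanishing_at])
    show "F.subspace W0"
      unfolding W0_def by (rule subspace_image_upd_zero[OF insert.prems(2)])
    show "U0 \<subseteq> supported_on A" "W0 \<subseteq> supported_on A"
      using insert.prems(3,4) by (auto simp: U0_def W0_def supported_on_def)
    show "dot_on A u w0 = 0" if "u \<in> U0" "w0 \<in> W0" for u w0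
    proof -
      obtain w where "w \<in> W" "w0 = w(p := 0)" using \<open>w0 \<in> W0\<close> W0_def by blast
      then have "dot_on A u w0 = dot_on A u w"
        using insert.hyps(2) by (auto simp: dot_on_def intro!: sum.cong)
      also have "\<dots> = dot_on (insert p A) u w"
        using \<open>u \<in> U0\<close> insert.hyps by (simp add: dot_on_insert U0_def)
      finally show ?thesis using insert.prems(5) \<open>w \<in> W\<close> \<open>u \<in> U0\<close> U0_def by simp
    qed
  qed
  moreover have "finite U" "finite W"
    using insert.prems(3,4) finite_supported_on[of "insert p A"] insert.hyps(1)
    by (meson finite_insert finite_subset)+
  then have "card U * card W \<le> 2 * (card U0 * card W0)"
    unfolding U0_def W0_def
    by (rule card_mult_card_le_double_upd_zero[OF insert.prems(1,2) _ _ insert.hyps insert.prems(5)])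
  ultimately show ?case using insert.hyps by simp
qed

lemma binary_code_subset_supported_on:
  assumes "\<And>l. l \<in> L \<Longrightarrow> l \<subseteq> A"
  shows "binary_code L \<subseteq> supported_on A"
  unfolding binary_code_def
proof (rule F.span_minimal[OF _ subspace_supported_on])
  show "charvec ` L \<subseteq> supported_on A"
    using assms by (fastforce simp: charvec_def supported_on_def)
qed

definition code_hull :: "'a set \<Rightarrow> ('a \<Rightarrow> bit) set \<Rightarrow> ('a \<Rightarrow> bit) set" where
  "code_hull A C = {d \<in> C. \<forall>c\<in>C. dot_on A c d = 0}"

lemma subspace_code_hull:
  assumes "F.subspace C"
  shows "F.subspace (code_hull A C)"
  unfolding code_hull_def using F.subspace_0[OF assms] F.subspace_add[OF assms] F.subspace_scale[OF assms]
  by (intro F.subspaceI) (simp_all add: dot_on_add_right dot_on_scale_right)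

lemma card_mult_card_code_hull_le:
  assumes "finite A" "F.subspace C" "C \<subseteq> supported_on A"
  shows "card C * card (code_hull A C) \<le> 2 ^ card A"
  using assms subspace_code_hull[OF assms(2)]
  by (intro card_mult_card_orthogonal_subspaces_le) (auto simp: code_hull_def)

lemma mem_code_hull_binary_codeI:
  assumes "c \<in> binary_code L" "\<And>l. l \<in> L \<Longrightarrow> dot_on A c (charvec l) = 0"
  shows "c \<in> code_hull A (binary_code L)"
proof -
  have "dot_on A g c = dot_on A g 0" if "g \<in> charvec ` L" for g
    using that assms(2) by (auto simp: dot_on_commute[of A _ c])
  then have "dot_on A c' c = 0" if "c' \<in> binary_code L" for c'
    using dot_on_span_eqI[of c' "charvec ` L" A c 0] that by (simp add: binary_code_def)
  then show ?thesis using assms(1) by (simp add: code_hull_def)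
qed

lemma card_binary_code_le_card_code_hull:
  assumes "finite Cls" "L = \<Union>Cls"
    and same_class: "\<And>K l m m'. K \<in> Cls \<Longrightarrow> m \<in> K \<Longrightarrow> m' \<in> K \<Longrightarrow> l \<in> L \<Longrightarrow>
      dot_on P (charvec l) (charvec m) = dot_on P (charvec l) (charvec m')"
    and "finite (binary_code L)"
  shows "card (binary_code L) \<le> 2 ^ card Cls * card (code_hull P (binary_code L))"
proof -
  let ?C = "binary_code L"
  (* For an empty K the chosen line is junk; that only shrinks the kernel of \<phi>. *)
  define \<phi> where "\<phi> c = (\<lambda>K. if K \<in> Cls then dot_on P c (charvec (SOME m. m \<in> K)) else 0)" for c
  have span: "?C = F.span (charvec ` L)" by (simp add: binary_code_def)
  have kernel: "{c \<in> ?C. \<phi> c = 0} \<subseteq> code_hull P ?C"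
  proof
    fix c assume c: "c \<in> {c \<in> ?C. \<phi> c = 0}"
    then have c_span: "c \<in> F.span (charvec ` L)" by (simp add: span)
    have "dot_on P c (charvec m) = 0" if "m \<in> L" for m
    proof -
      obtain K where K: "K \<in> Cls" "m \<in> K" using \<open>m \<in> L\<close> assms(2) by blast
      have "(SOME m. m \<in> K) \<in> K" using K(2) by (rule someI)
      then have "dot_on P g (charvec m) = dot_on P g (charvec (SOME m. m \<in> K))"
        if "g \<in> charvec ` L" for g
        using that same_class[OF K] by auto
      then have "dot_on P c (charvec m) = dot_on P c (charvec (SOME m. m \<in> K))"
        by (rule dot_on_span_eqI[OF c_span])
      also have "\<dots> = \<phi> c K" using K(1) by (simp add: \<phi>_def)
      finally show ?thesis using c by simp
    qed
    then show "c \<in> code_hull P ?C"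
      using c by (intro mem_code_hull_binary_codeI) simp_all
  qed
  have "card ?C \<le> card (\<phi> ` ?C) * card {c \<in> ?C. \<phi> c = 0}"
    using assms(4) F.subspace_diff[OF F.subspace_span]
    by (intro card_le_card_image_mult_card_kernel)
      (auto simp: span \<phi>_def dot_on_diff_left fun_eq_iff)
  also have "\<dots> \<le> card (supported_on Cls) * card (code_hull P ?C)"
    using kernel assms(4) finite_supported_on[OF assms(1)]
    by (intro mult_le_mono card_mono) (auto simp: code_hull_def \<phi>_def supported_on_def)
  finally show ?thesis
    by (simp add: card_supported_on[OF assms(1)])
qed

lemma card_binary_code_sq_le:
  assumes "finite P" "finite Cls" "L = \<Union>Cls" "\<And>l. l \<in> L \<Longrightarrow> l \<subseteq> P"
    and same_class: "\<And>K l m m'. K \<in> Cls \<Longrightarrow> m \<in> K \<Longrightarrow> m' \<in> K \<Longrightarrow> l \<in> L \<Longrightarrow>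
      dot_on P (charvec l) (charvec m) = dot_on P (charvec l) (charvec m')"
  shows "card (binary_code L) ^ 2 \<le> 2 ^ card Cls * 2 ^ card P"
proof -
  let ?C = "binary_code L"
  have supp: "?C \<subseteq> supported_on P"
    using assms(4) by (rule binary_code_subset_supported_on)
  then have "finite ?C"
    using finite_supported_on[OF assms(1)] finite_subset by blast
  then have "card ?C * card ?C \<le> 2 ^ card Cls * card (code_hull P ?C) * card ?C"
    using card_binary_code_le_card_code_hull[OF assms(2,3) same_class] by simp
  also have "\<dots> = 2 ^ card Cls * (card ?C * card (code_hull P ?C))"
    by (simp add: ac_simps)
  also have "\<dots> \<le> 2 ^ card Cls * 2 ^ card P"
    using card_mult_card_code_hull_le[OF assms(1) _ supp] by (simp add: binary_code_def)
  finally show ?thesis by (simp add: power2_eq_square)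
qed

lemma net_dot_charvec_lines:
  assumes "is_net P L n k" "even n"
  obtains Cls where "finite P" "card P = n ^ 2" "finite Cls" "card Cls = k" "L = \<Union>Cls"
    "\<And>l. l \<in> L \<Longrightarrow> l \<subseteq> P"
    "\<And>K K' l m. K \<in> Cls \<Longrightarrow> K' \<in> Cls \<Longrightarrow> l \<in> K \<Longrightarrow> m \<in> K' \<Longrightarrow>
       dot_on P (charvec l) (charvec m) = (if K = K' then 0 else 1)"
proof -
  from assms(1) obtain Cls where net: "finite P" "card P = n ^ 2" "finite Cls" "card Cls = k" "L = \<Union>Cls"
    and classes: "\<forall>K\<in>Cls. card K = n \<and> (\<forall>l\<in>K. l \<subseteq> P \<and> card l = n) \<and> (\<forall>x\<in>P. \<exists>!l. l \<in> K \<and> x \<in> l)"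
    and meet: "\<forall>K\<in>Cls. \<forall>K'\<in>Cls. K \<noteq> K' \<longrightarrow> (\<forall>l\<in>K. \<forall>m\<in>K'. card (l \<inter> m) = 1)"
    unfolding is_net_def by auto
  have lines: "l \<subseteq> P" "card l = n" if "K \<in> Cls" "l \<in> K" for K l
    using bspec[OF classes that(1)] that(2) by simp_all
  have unique: "\<exists>!l. l \<in> K \<and> x \<in> l" if "K \<in> Cls" "x \<in> P" for K x
    using bspec[OF classes that(1)] that(2) by simp
  have dot: "dot_on P (charvec l) (charvec m) = (if K = K' then 0 else 1)"
    if K: "K \<in> Cls" "K' \<in> Cls" "l \<in> K" "m \<in> K'" for K K' l m
  proof -
    have "P \<inter> l \<inter> m = l \<inter> m" using lines(1)[OF K(1,3)] by blast
    then have "dot_on P (charvec l) (charvec m) = of_nat (card (l \<inter> m))"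
      by (simp add: dot_on_charvec[OF net(1)])
    moreover have "(of_nat (card (l \<inter> m)) :: bit) = 0" if "K = K'"
    proof (cases "l = m")
      case True
      then show ?thesis using lines(2)[OF K(1,3)] assms(2) by (simp add: of_nat_bit_eq_0_if_even)
    next
      case False
      have "l \<inter> m = {}"
        using unique[OF K(1)] lines(1)[OF K(1,3)] K(3,4) \<open>K = K'\<close> False by blast
      then show ?thesis by simp
    qed
    moreover have "card (l \<inter> m) = 1" if "K \<noteq> K'"
      using bspec[OF bspec[OF meet K(1)] K(2)] that K(3,4) by simp
    ultimately show ?thesis by (cases "K = K'") simp_all
  qed
  have lines_P: "l \<subseteq> P" if "l \<in> L" for l
  proof -
    obtain K where "K \<in> Cls" "l \<in> K" using \<open>l \<in> L\<close> net(5) by blast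
    then show ?thesis by (rule lines(1))
  qed
  from net lines_P dot show thesis by (rule that)
qed

theorem two_mult_dim_binary_code_net_le:
  assumes "is_net P L n k" "even n"
  shows "2 * F.dim (binary_code L) \<le> n ^ 2 + k"
proof -
  let ?C = "binary_code L"
  obtain Cls where net: "finite P" "card P = n ^ 2" "finite Cls" "card Cls = k" "L = \<Union>Cls"
    "\<And>l. l \<in> L \<Longrightarrow> l \<subseteq> P"
    and dot: "\<And>K K' l m. K \<in> Cls \<Longrightarrow> K' \<in> Cls \<Longrightarrow> l \<in> K \<Longrightarrow> m \<in> K' \<Longrightarrow>
      dot_on P (charvec l) (charvec m) = (if K = K' then 0 else 1)"
    using net_dot_charvec_lines[OF assms] by blast
  have "dot_on P (charvec l) (charvec m) = dot_on P (charvec l) (charvec m')"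
    if "K \<in> Cls" "m \<in> K" "m' \<in> K" "l \<in> L" for K l m m'
  proof -
    obtain K' where K': "K' \<in> Cls" "l \<in> K'" using \<open>l \<in> L\<close> net(5) by blast
    show ?thesis using dot[OF K'(1) that(1) K'(2) that(2)] dot[OF K'(1) that(1) K'(2) that(3)] by simp
  qed
  from card_binary_code_sq_le[OF net(1,3,5,6) this]
  have card_C: "card ?C ^ 2 \<le> 2 ^ (n ^ 2 + k)"
    using net(2,4) by (simp add: power_add mult.commute)
  have "finite ?C"
    using binary_code_subset_supported_on[OF net(6)] finite_supported_on[OF net(1)]
    by (rule finite_subset)
  then have "2 ^ F.dim ?C \<le> card ?C"
    by (intro F.two_pow_dim_le_card) (simp add: binary_code_def)
  then have "(2 ^ F.dim ?C) ^ 2 \<le> card ?C ^ 2"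
    by (rule power_mono) simp
  also note card_C
  finally have "(2::nat) ^ (F.dim ?C * 2) \<le> 2 ^ (n ^ 2 + k)"
    by (simp only: power_mult)
  then show ?thesis by simp
qed

theorem mainTheorem1:
  fixes P :: "'p set" and L :: "'p set set"
  assumes "is_net P L 6 4"
  shows "vector_space.dim fscale (binary_code L) \<le> 20"
  using two_mult_dim_binary_code_net_le[OF assms] by simp

end
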